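(* As $n\to\infty$, $\displaystyle |D_n|\sim\frac{2\alpha}{\pi^2}\,n\log n$, where $\alpha=\log\sqrt{1+\sqrt2}$.
   Context: For real $n>0$, $D_n$ is the set of triples $(k,r,s)\in\mathbf Z^3$ with $k>0$ odd, $r>s>0$, $\gcd(r,s)=1$, $r\not\equiv s\pmod 2$, $k(r^2-s^2)\le n$ and $2krs\le n$. *)

theory Defs
  imports "HOL-Analysis.Analysis" "HOL-Library.Landau_Symbols"
begin

definition D :: "real \<Rightarrow> (int \<times> int \<times> int) set" where
  "D n = {(k, r, s). k > 0 \<and> odd k \<and> r > s \<and> s > 0 \<and> gcd r s = 1 \<and>
            r mod 2 \<noteq> s mod 2 \<and>
            real_of_int (k * (r\<^sup>2 - s\<^sup>2)) \<le> n \<and> real_of_int (2 * k * r * s) \<le> n}"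

definition alpha :: real where
  "alpha = ln (sqrt (1 + sqrt 2))"

end

theory Submission
  imports Defs "HOL-Real_Asymp.Real_Asymp"
begin

text \<open>
  A triple (k, r, s) lies in D n iff k is odd and (r, s) is a primitive Euclid pair whose
  triangle (r^2 - s^2, 2rs, r^2 + s^2) has both legs at most n / k. Hence
  |D n| = \<Sum>_k P(n / k) over odd k, where P(y) counts primitive pairs with legs at most y.
  Dropping coprimality, the pairs with legs at most y are the lattice points of opposite
  parity in a plane region of area \<alpha> y, so their number Q(y) is \<alpha> y / 2 + O(\<surd>y).
  Grouping pairs by their gcd, which is odd, gives Q(y) = \<Sum>_g P(y / g^2) over odd g; as
  \<Sum>_g g^-2 = \<pi>^2/8 this forces P(y) \<sim> (4\<alpha>/\<pi>^2) y. Finally \<Sum>_k 1/k \<sim> (ln n)/2 over odd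
  k \<le> n, so |D n| \<sim> (2\<alpha>/\<pi>^2) n ln n.
\<close>

section \<open>The region cut out by the two leg constraints\<close>

text \<open>
  For t > 0 the reals r > t with r^2 - t^2 \<le> x and 2rt \<le> x (the row s = t of the region)
  form an interval of length row_width x t (lemma row_width_eq). The two constraints bind simultaneously at t = kink x,
  where \<surd>(x + t^2) = x / (2t); using max t (kink x) in the denominator only removes the
  singularity at t = 0.
\<close>

definition kink :: "real \<Rightarrow> real" where
  "kink x = sqrt (x * (sqrt 2 - 1) / 2)"

definition row_width :: "real \<Rightarrow> real \<Rightarrow> real" where
  "row_width x t = max 0 (min (sqrt (x + t\<^sup>2) - t) (x / (2 * max t (kink x)) - t))"

lemma kink_pos: "x > 0 \<Longrightarrow> kink x > 0"
  unfolding kink_def by simp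

lemma kink_sq: "x \<ge> 0 \<Longrightarrow> (kink x)\<^sup>2 = x * (sqrt 2 - 1) / 2"
  unfolding kink_def by simp

lemma sqrt_2_less_2: "sqrt 2 < (2::real)"
  using real_sqrt_less_mono[of 2 4] by (simp add: real_sqrt_four)

lemma kink_less: assumes "x > 0" shows "kink x < sqrt (x / 2)"
  unfolding kink_def using assms sqrt_2_less_2 by (intro real_sqrt_less_mono) simp

lemma sqrt_add_kink_sq: assumes "x > 0" shows "sqrt (x + (kink x)\<^sup>2) = x / (2 * kink x)"
proof -
  have c: "kink x > 0" using kink_pos assms .
  have "4 * (kink x)\<^sup>2 * (x + (kink x)\<^sup>2) = x\<^sup>2 * ((sqrt 2 - 1) * (sqrt 2 + 1))"
  proof -
    have "4 * (x * (w - 1) / 2) * (x + x * (w - 1) / 2) = x\<^sup>2 * ((w - 1) * (w + 1))" for w :: real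
      by (simp add: field_simps power2_eq_square)
    thus ?thesis unfolding kink_sq[OF less_imp_le[OF assms]] .
  qed
  also have "(sqrt 2 - 1) * (sqrt 2 + 1) = (1::real)"
    by (simp add: algebra_simps)
  finally have "(x / (2 * kink x))\<^sup>2 = x + (kink x)\<^sup>2"
    using c by (simp add: power_divide field_simps power2_eq_square)
  thus ?thesis using assms c by (intro real_sqrt_unique) auto
qed

lemma sqrt_add_sq_minus_antimono:
  assumes "x \<ge> 0" "0 \<le> s" "s \<le> t"
  shows "sqrt (x + t\<^sup>2) - t \<le> sqrt (x + s\<^sup>2) - s"
proof -
  have "s \<le> sqrt (x + s\<^sup>2)" using assms by (simp add: real_le_rsqrt)
  hence "2 * (t - s) * s \<le> 2 * (t - s) * sqrt (x + s\<^sup>2)"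
    using assms by (intro mult_left_mono) auto
  hence "x + t\<^sup>2 \<le> (sqrt (x + s\<^sup>2) + (t - s))\<^sup>2"
    using assms by (simp add: power2_eq_square algebra_simps)
  hence "sqrt (x + t\<^sup>2) \<le> sqrt (x + s\<^sup>2) + (t - s)"
    using assms by (intro real_le_lsqrt) auto
  thus ?thesis by simp
qed

lemma row_width_nonneg: "row_width x t \<ge> 0"
  unfolding row_width_def by simp

lemma row_width_antimono: assumes "x > 0" "0 \<le> s" "s \<le> t" shows "row_width x t \<le> row_width x s"
proof -
  have "x / (2 * max t (kink x)) \<le> x / (2 * max s (kink x))"
    using assms kink_pos[OF assms(1)] by (intro divide_left_mono) auto
  thus ?thesis unfolding row_width_def using sqrt_add_sq_minus_antimono[of x s t] assms
    by (intro max.mono order.refl min.mono) auto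
qed

lemma continuous_on_row_width: assumes "x > 0" shows "continuous_on {0..} (row_width x)"
  unfolding row_width_def using kink_pos[OF assms] by (intro continuous_intros) auto

lemma row_width_eq: assumes "x > 0" "t > 0"
  shows "row_width x t = max 0 (min (sqrt (x + t\<^sup>2)) (x / (2 * t)) - t)"
proof (cases "t \<le> kink x")
  case True
  have "x / (2 * kink x) \<le> x / (2 * t)" using assms True by (intro divide_left_mono) auto
  moreover have "sqrt (x + t\<^sup>2) \<le> sqrt (x + (kink x)\<^sup>2)" using assms True by (simp add: power_mono)
  ultimately show ?thesis unfolding row_width_def using True sqrt_add_kink_sq[OF assms(1)]
    by (simp add: max_def min_def)
next
  case False
  then show ?thesis unfolding row_width_def by (simp add: max_def min_def)
qed

lemma row_width_below_kink: assumes "x > 0" "0 \<le> t" "t \<le> kink x"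
  shows "row_width x t = sqrt (x + t\<^sup>2) - t"
proof -
  have "sqrt (x + t\<^sup>2) \<le> sqrt (x + (kink x)\<^sup>2)"
    using assms by (simp add: power_mono)
  hence "sqrt (x + t\<^sup>2) - t \<le> x / (2 * max t (kink x)) - t"
    using assms sqrt_add_kink_sq[OF assms(1)] by (simp add: max_def)
  moreover have "t < sqrt (x + t\<^sup>2)"
    using assms by (simp add: real_less_rsqrt)
  ultimately show ?thesis unfolding row_width_def by simp
qed

lemma row_width_above_kink: assumes "x > 0" "kink x \<le> t"
  shows "row_width x t = max 0 (x / (2 * t) - t)"
proof -
  have c: "kink x > 0" using kink_pos[OF assms(1)] .
  have "x / (2 * t) \<le> x / (2 * kink x)" using assms c by (intro divide_left_mono) auto
  also have "\<dots> = sqrt (x + (kink x)\<^sup>2)" using sqrt_add_kink_sq[OF assms(1)] by simp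
  also have "\<dots> \<le> sqrt (x + t\<^sup>2)" using assms c by (simp add: power_mono)
  finally show ?thesis using row_width_eq[of x t] assms c by (simp add: min_absorb2)
qed

lemma has_real_derivative_sqrt_antiderivative:
  assumes "x > 0"
  shows "((\<lambda>t. (t * sqrt (x + t\<^sup>2) + x * ln (t + sqrt (x + t\<^sup>2))) / 2 - t\<^sup>2 / 2)
           has_real_derivative sqrt (x + t\<^sup>2) - t) (at t)"
proof -
  define s where "s = sqrt (x + t\<^sup>2)"
  have q: "x + t\<^sup>2 > 0" using assms by (simp add: add_pos_nonneg)
  hence s: "s > 0" "s\<^sup>2 = x + t\<^sup>2" by (auto simp: s_def)
  have "\<bar>t\<bar>\<^sup>2 < s\<^sup>2" using s assms by simp
  hence "\<bar>t\<bar> < s" using s(1) by (rule power2_less_imp_less[OF _ less_imp_le])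
  hence ts: "t + s > 0" by linarith
  have "1 + inverse s * t = (t + s) / s" using s by (simp add: field_simps)
  hence "(1 + inverse s * t) * x * 2 / (t + s) = ((t + s) / (t + s)) * (2 * x / s)" by simp
  also have "\<dots> = 2 * x / s" using ts by simp
  moreover have "inverse s * t * t * 2 = 2 * t\<^sup>2 / s" by (simp add: field_simps power2_eq_square)
  ultimately have "inverse s * t * t * 2 + (1 + inverse s * t) * x * 2 / (t + s) = 2 * (x + t\<^sup>2) / s"
    by (simp add: add_divide_distrib)
  also have "\<dots> = 2 * s" using s by (simp add: field_simps power2_eq_square)
  finally have key: "inverse s * t * t * 2 + (1 + inverse s * t) * x * 2 / (t + s) = 2 * s" .
  \<comment> \<open>the shape in which derivative_eq_intros leaves the derivative\<close>
  show ?thesis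
    apply (rule DERIV_cong)
     apply (auto intro!: derivative_eq_intros simp: q ts[unfolded s_def])
    using q key unfolding s_def by simp_all
qed

lemma has_real_derivative_ln_antiderivative:
  assumes "t > 0"
  shows "((\<lambda>t. x / 2 * ln t - t\<^sup>2 / 2) has_real_derivative x / (2 * t) - t) (at t)"
  by (rule DERIV_cong) (auto intro!: derivative_eq_intros simp: assms)

lemma row_width_vanishes: assumes "x > 0" "sqrt (x / 2) \<le> t" shows "row_width x t = 0"
proof -
  have k: "0 < kink x" "kink x < sqrt (x / 2)" using kink_pos kink_less assms(1) by auto
  hence t: "t > 0" using assms(2) by linarith
  have "(sqrt (x / 2))\<^sup>2 \<le> t\<^sup>2" using assms by (intro power_mono) auto
  hence "x \<le> t * (2 * t)" using assms(1) by (simp add: power2_eq_square)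
  hence "x / (2 * t) - t \<le> 0" using t by (simp add: pos_divide_le_eq)
  thus ?thesis using row_width_above_kink[OF assms(1)] k assms(2) by (simp add: max_absorb1)
qed

lemma has_integral_row_width_below_kink:
  assumes "x > 0"
  defines "c \<equiv> kink x"
  shows "(row_width x has_integral x / 4 + x / 2 * (ln (c + x / (2 * c)) - ln (sqrt x)) - c\<^sup>2 / 2)
           {0..c}"
proof -
  define F where "F t = (t * sqrt (x + t\<^sup>2) + x * ln (t + sqrt (x + t\<^sup>2))) / 2 - t\<^sup>2 / 2" for t
  have c: "c > 0" "sqrt (x + c\<^sup>2) = x / (2 * c)"
    using kink_pos sqrt_add_kink_sq assms by auto
  have "((\<lambda>t. sqrt (x + t\<^sup>2) - t) has_integral F c - F 0) {0..c}"
    using c has_real_derivative_sqrt_antiderivative[OF assms(1)] unfolding F_def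
    by (intro fundamental_theorem_of_calculus)
       (auto simp: has_real_derivative_iff_has_vector_derivative intro: has_vector_derivative_at_within)
  hence "(row_width x has_integral F c - F 0) {0..c}"
    by (rule has_integral_eq[rotated]) (auto simp: row_width_below_kink assms)
  moreover have "F c = x / 4 + x / 2 * ln (c + x / (2 * c)) - c\<^sup>2 / 2"
    unfolding F_def c(2) using c(1) by simp
  moreover have "F 0 = x / 2 * ln (sqrt x)"
    unfolding F_def by simp
  ultimately show ?thesis by (simp add: algebra_simps)
qed

lemma has_integral_row_width_above_kink:
  assumes "x > 0"
  defines "c \<equiv> kink x"
  shows "(row_width x has_integral x / 2 * (ln (sqrt (x / 2)) - ln c) - x / 4 + c\<^sup>2 / 2)
           {c..sqrt (x / 2)}"
proof -
  define F where "F t = x / 2 * ln t - t\<^sup>2 / 2" for t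
  have c: "0 < c" "c < sqrt (x / 2)" using kink_pos kink_less assms by auto
  have "((\<lambda>t. x / (2 * t) - t) has_integral F (sqrt (x / 2)) - F c) {c..sqrt (x / 2)}"
    using c has_real_derivative_ln_antiderivative unfolding F_def
    by (intro fundamental_theorem_of_calculus)
       (auto simp: has_real_derivative_iff_has_vector_derivative intro: has_vector_derivative_at_within)
  moreover have eq: "row_width x t = x / (2 * t) - t" if "c \<le> t" "t \<le> sqrt (x / 2)" for t
  proof -
    have "t\<^sup>2 \<le> (sqrt (x / 2))\<^sup>2" using that c by (intro power_mono) auto
    hence "t * (2 * t) \<le> x" using assms(1) by (simp add: power2_eq_square)
    hence "t \<le> x / (2 * t)" using that c by (simp add: pos_le_divide_eq)
    thus ?thesis using row_width_above_kink[OF assms(1)] that c_def by simp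
  qed
  ultimately have "(row_width x has_integral F (sqrt (x / 2)) - F c) {c..sqrt (x / 2)}"
    by (elim has_integral_eq[rotated]) (simp add: eq)
  moreover have "F (sqrt (x / 2)) - F c = x / 2 * (ln (sqrt (x / 2)) - ln c) - x / 4 + c\<^sup>2 / 2"
    unfolding F_def using assms(1) by (simp add: algebra_simps)
  ultimately show ?thesis by simp
qed

lemma kink_ratio:
  assumes "x > 0"
  shows "(kink x + x / (2 * kink x)) * sqrt (x / 2) / (sqrt x * kink x) = 1 + sqrt 2"
proof -
  define c where "c = kink x"
  have c: "c > 0" "2 * c\<^sup>2 = x * (sqrt 2 - 1)" using kink_pos assms by (auto simp: c_def kink_sq)
  have sx: "sqrt (x / 2) = sqrt x / sqrt 2" "sqrt x * sqrt x = x" using assms by (auto simp: real_sqrt_divide)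
  have "(c + x / (2 * c)) * sqrt (x / 2) / (sqrt x * c) = (2 * c\<^sup>2 + x) / (2 * c\<^sup>2 * sqrt 2)"
    using c(1) assms sx by (simp add: field_simps power2_eq_square)
  also have "\<dots> = 1 / (sqrt 2 - 1)"
    unfolding c(2) using assms sqrt_2_less_2 by (simp add: field_simps)
  also have "\<dots> = 1 + sqrt 2"
  proof -
    have "(sqrt 2 - 1) * (sqrt 2 + 1) = (1::real)" by (simp add: algebra_simps)
    thus ?thesis by (simp add: field_simps)
  qed
  finally show ?thesis unfolding c_def .
qed

lemma has_integral_row_width:
  assumes "x > 0" "sqrt (x / 2) \<le> B"
  shows "(row_width x has_integral x * alpha) {0..B}"
proof -
  define c where "c = kink x"
  define b where "b = sqrt (x / 2)"
  have c: "0 < c" "c < b" using kink_pos kink_less assms(1) by (auto simp: c_def b_def)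
  have "(row_width x has_integral
          (x / 4 + x / 2 * (ln (c + x / (2 * c)) - ln (sqrt x)) - c\<^sup>2 / 2)
        + (x / 2 * (ln b - ln c) - x / 4 + c\<^sup>2 / 2) + 0) {0..B}"
  proof (rule has_integral_combine[OF _ _ has_integral_combine[of 0 c b]])
    show "(row_width x has_integral 0) {b..B}"
      using has_integral_0 by (rule has_integral_eq[rotated]) (use row_width_vanishes assms b_def in auto)
  qed (use c assms has_integral_row_width_below_kink has_integral_row_width_above_kink
       in \<open>auto simp: c_def b_def\<close>)
  moreover have "x * alpha = x / 2 * (ln (c + x / (2 * c)) - ln (sqrt x) + (ln b - ln c))"
  proof -
    have "0 < c + x / (2 * c)" using c assms by (simp add: add_pos_pos)
    hence "ln (c + x / (2 * c)) - ln (sqrt x) + (ln b - ln c) = ln ((c + x / (2 * c)) * b / (sqrt x * c))"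
      using c assms by (simp add: ln_mult ln_div)
    also have "\<dots> = 2 * alpha"
      using kink_ratio[OF assms(1)] unfolding alpha_def by (simp add: c_def b_def ln_sqrt add_pos_pos)
    finally show ?thesis by simp
  qed
  ultimately show ?thesis by (elim has_integral_eq_rhs) (erule ssubst, simp add: field_simps)
qed

section \<open>Counting Euclid pairs\<close>

lemma card_opposite_parity_le:
  fixes s :: int and M :: real
  shows "card {r. s < r \<and> r mod 2 \<noteq> s mod 2 \<and> of_int r \<le> M} = nat \<lfloor>(M - of_int s + 1) / 2\<rfloor>"
proof -
  define K where "K = \<lfloor>(M - of_int s + 1) / 2\<rfloor>"
  have "{r. s < r \<and> r mod 2 \<noteq> s mod 2 \<and> of_int r \<le> M} = (\<lambda>j. s + 1 + 2 * j) ` {0..<K}"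
  proof (intro equalityI subsetI)
    fix r assume "r \<in> {r. s < r \<and> r mod 2 \<noteq> s mod 2 \<and> of_int r \<le> M}"
    hence r: "s < r" "r mod 2 \<noteq> s mod 2" "of_int r \<le> M" by auto
    define j where "j = (r - s - 1) div 2"
    have rj: "r = s + 1 + 2 * j" "0 \<le> j" using r(1,2) unfolding j_def by presburger+
    have "of_int (j + 1) \<le> (M - of_int s + 1) / 2" using r(3) rj(1) by simp
    hence "j + 1 \<le> K" unfolding K_def by (simp add: le_floor_iff)
    thus "r \<in> (\<lambda>j. s + 1 + 2 * j) ` {0..<K}" using rj by auto
  next
    fix r assume "r \<in> (\<lambda>j. s + 1 + 2 * j) ` {0..<K}"
    then obtain j where j: "r = s + 1 + 2 * j" "0 \<le> j" "j < K" by auto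
    hence "j + 1 \<le> K" by simp
    hence "of_int (j + 1) \<le> (M - of_int s + 1) / 2" unfolding K_def by (simp add: le_floor_iff)
    moreover have "r mod 2 \<noteq> s mod 2" using j(1) by presburger
    ultimately show "r \<in> {r. s < r \<and> r mod 2 \<noteq> s mod 2 \<and> of_int r \<le> M}" using j by auto
  qed
  moreover have "inj_on (\<lambda>j. s + 1 + 2 * j) {0..<K}" by (auto simp: inj_on_def)
  ultimately show ?thesis by (simp add: card_image K_def)
qed

lemma card_opposite_parity_le_approx:
  fixes s :: int and M :: real
  shows "\<bar>real (card {r. s < r \<and> r mod 2 \<noteq> s mod 2 \<and> of_int r \<le> M}) - max 0 (M - of_int s) / 2\<bar> \<le> 1"
proof -
  define d where "d = M - of_int s"
  define F where "F = \<lfloor>(d + 1) / 2\<rfloor>"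
  have F: "real_of_int F \<le> (d + 1) / 2" "(d + 1) / 2 - 1 < real_of_int F" unfolding F_def by linarith+
  have "card {r. s < r \<and> r mod 2 \<noteq> s mod 2 \<and> of_int r \<le> M} = nat F"
    unfolding card_opposite_parity_le F_def d_def by (simp add: add_diff_eq)
  moreover have "\<bar>real (nat F) - max 0 d / 2\<bar> \<le> 1"
  proof (cases "d \<ge> 0")
    case True
    hence "F \<ge> 0" unfolding F_def by simp
    thus ?thesis using True F by (simp add: abs_le_iff)
  next
    case False
    hence "F \<le> 0" unfolding F_def by (simp add: floor_le_iff)
    thus ?thesis using False by simp
  qed
  ultimately show ?thesis unfolding d_def by simp
qed

definition euclid_pairs :: "real \<Rightarrow> (int \<times> int) set" where
  "euclid_pairs y = {(r, s). s < r \<and> 0 < s \<and> r mod 2 \<noteq> s mod 2 \<and>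
     real_of_int (r\<^sup>2 - s\<^sup>2) \<le> y \<and> real_of_int (2 * r * s) \<le> y}"

definition primitive_euclid_pairs :: "real \<Rightarrow> (int \<times> int) set" where
  "primitive_euclid_pairs y = {(r, s). (r, s) \<in> euclid_pairs y \<and> gcd r s = 1}"

lemma euclid_pair_snd_le_sqrt:
  fixes r s :: int
  assumes "s < r" "0 < s" "real_of_int (2 * r * s) \<le> y"
  shows "real_of_int s \<le> sqrt y"
proof -
  have "s * s \<le> 2 * r * s" using assms by (simp add: mult_right_mono)
  hence "(real_of_int s)\<^sup>2 \<le> y" using assms(3) unfolding power2_eq_square
    by (metis of_int_le_iff of_int_mult order_trans)
  thus ?thesis by (simp add: real_le_rsqrt)
qed

lemma euclid_pairs_subset: "euclid_pairs y \<subseteq> {0..\<lfloor>y\<rfloor>} \<times> {0..\<lfloor>y\<rfloor>}"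
proof
  fix p assume "p \<in> euclid_pairs y"
  then obtain r s where p: "p = (r, s)" "s < r" "0 < s" "real_of_int (2 * r * s) \<le> y"
    unfolding euclid_pairs_def by auto
  have "r \<le> 2 * r * s" using p by (simp add: mult_le_cancel_left1)
  hence "real_of_int r \<le> y" using p by linarith
  hence "r \<le> \<lfloor>y\<rfloor>" by (simp add: le_floor_iff)
  thus "p \<in> {0..\<lfloor>y\<rfloor>} \<times> {0..\<lfloor>y\<rfloor>}" using p by auto
qed

lemma finite_euclid_pairs [simp]: "finite (euclid_pairs y)"
  by (rule finite_subset[OF euclid_pairs_subset]) simp

lemma finite_primitive_euclid_pairs [simp]: "finite (primitive_euclid_pairs y)"
  by (rule finite_subset[of _ "euclid_pairs y"]) (auto simp: primitive_euclid_pairs_def)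

lemma primitive_euclid_pairs_mono: "y \<le> y' \<Longrightarrow> primitive_euclid_pairs y \<subseteq> primitive_euclid_pairs y'"
  unfolding primitive_euclid_pairs_def euclid_pairs_def by auto

lemma euclid_row_eq:
  assumes "x > 0" "s > 0"
  shows "{r. (r, s) \<in> euclid_pairs x} = {r. s < r \<and> r mod 2 \<noteq> s mod 2 \<and>
           of_int r \<le> min (sqrt (x + (of_int s)\<^sup>2)) (x / (2 * of_int s))}"
proof -
  have "(real_of_int (r\<^sup>2 - s\<^sup>2) \<le> x \<and> real_of_int (2 * r * s) \<le> x) \<longleftrightarrow>
        of_int r \<le> min (sqrt (x + (of_int s)\<^sup>2)) (x / (2 * of_int s))" if "s < r" for r
  proof -
    have "real_of_int (r\<^sup>2 - s\<^sup>2) \<le> x \<longleftrightarrow> (of_int r)\<^sup>2 \<le> x + (of_int s)\<^sup>2"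
      unfolding of_int_diff of_int_power by linarith
    also have "\<dots> \<longleftrightarrow> sqrt ((of_int r)\<^sup>2) \<le> sqrt (x + (of_int s)\<^sup>2)"
      by (rule real_sqrt_le_iff[symmetric])
    also have "sqrt ((of_int r)\<^sup>2) = (of_int r :: real)" using that assms by simp
    finally have "real_of_int (r\<^sup>2 - s\<^sup>2) \<le> x \<longleftrightarrow> of_int r \<le> sqrt (x + (of_int s)\<^sup>2)" .
    moreover have "real_of_int (2 * r * s) \<le> x \<longleftrightarrow> of_int r \<le> x / (2 * of_int s)"
      using assms by (simp add: pos_le_divide_eq ac_simps)
    ultimately show ?thesis by simp
  qed
  thus ?thesis unfolding euclid_pairs_def using assms by auto
qed

lemma card_euclid_row_approx:
  assumes "x > 0" "k > 0"
  shows "\<bar>real (card {r. (r, int k) \<in> euclid_pairs x}) - row_width x (real k) / 2\<bar> \<le> 1"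
proof -
  define M where "M = min (sqrt (x + (real k)\<^sup>2)) (x / (2 * real k))"
  have "{r. (r, int k) \<in> euclid_pairs x} = {r. int k < r \<and> r mod 2 \<noteq> int k mod 2 \<and> of_int r \<le> M}"
    unfolding M_def using euclid_row_eq[OF assms(1), of "int k"] assms by simp
  moreover have "row_width x (real k) = max 0 (M - real k)"
    unfolding M_def using assms row_width_eq by simp
  ultimately show ?thesis using card_opposite_parity_le_approx[of "int k" M] by simp
qed

lemma euclid_pairs_eq_UN_rows:
  assumes "x > 0"
  shows "euclid_pairs x = (\<Union>k\<in>{1..nat \<lceil>sqrt x\<rceil>}. (\<lambda>r. (r, int k)) ` {r. (r, int k) \<in> euclid_pairs x})"
proof (intro equalityI subsetI)
  fix p assume p: "p \<in> euclid_pairs x"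
  then obtain r s where rs: "p = (r, s)" "s < r" "0 < s" "real_of_int (2 * r * s) \<le> x"
    unfolding euclid_pairs_def by auto
  have "s \<le> \<lceil>sqrt x\<rceil>" using euclid_pair_snd_le_sqrt[OF rs(2-4)] by linarith
  hence "nat s \<in> {1..nat \<lceil>sqrt x\<rceil>}" using rs by auto
  thus "p \<in> (\<Union>k\<in>{1..nat \<lceil>sqrt x\<rceil>}. (\<lambda>r. (r, int k)) ` {r. (r, int k) \<in> euclid_pairs x})"
    using p rs by force
qed auto

lemma card_euclid_pairs_eq_sum_rows:
  assumes "x > 0"
  shows "card (euclid_pairs x) = (\<Sum>k\<in>{1..nat \<lceil>sqrt x\<rceil>}. card {r. (r, int k) \<in> euclid_pairs x})"
proof -
  have "finite {r. (r, int k) \<in> euclid_pairs x}" for k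
    using finite_imageI[OF finite_euclid_pairs, of fst x] by (rule finite_subset[rotated]) force
  hence "card (euclid_pairs x)
      = (\<Sum>k\<in>{1..nat \<lceil>sqrt x\<rceil>}. card ((\<lambda>r. (r, int k)) ` {r. (r, int k) \<in> euclid_pairs x}))"
    by (subst euclid_pairs_eq_UN_rows[OF assms], intro card_UN_disjoint) auto
  also have "\<dots> = (\<Sum>k\<in>{1..nat \<lceil>sqrt x\<rceil>}. card {r. (r, int k) \<in> euclid_pairs x})"
    by (intro sum.cong refl card_image) (auto simp: inj_on_def)
  finally show ?thesis .
qed

lemma sum_row_width_bounds:
  assumes "x > 0" "sqrt x \<le> real N"
  shows "x * alpha - sqrt x \<le> (\<Sum>k\<in>{1..N}. row_width x (real k))"
    and "(\<Sum>k\<in>{1..N}. row_width x (real k)) \<le> x * alpha"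
proof -
  interpret antimono_fun_sum_integral_diff "row_width x"
    using row_width_antimono[OF assms(1)] row_width_nonneg continuous_on_row_width[OF assms(1)]
    by unfold_locales auto
  have "sqrt (x / 2) \<le> sqrt x" using assms by simp
  hence "sqrt (x / 2) \<le> real N" using assms by linarith
  hence "integral {0..real N} (row_width x) = x * alpha"
    using has_integral_row_width[OF assms(1)] by (intro integral_unique)
  moreover have "row_width x 0 = sqrt x"
    using row_width_below_kink[OF assms(1), of 0] kink_pos[OF assms(1)] by simp
  moreover have "(\<Sum>k\<le>N. row_width x (real k)) = row_width x 0 + (\<Sum>k\<in>{1..N}. row_width x (real k))"
    by (simp add: atMost_atLeast0 sum.atLeast_Suc_atMost)
  moreover have "0 \<le> sum_integral_diff_series N" "sum_integral_diff_series N \<le> sum_integral_diff_series 0"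
    by (auto intro: sum_integral_diff_series_nonneg sum_integral_diff_series_antimono)
  ultimately show "x * alpha - sqrt x \<le> (\<Sum>k\<in>{1..N}. row_width x (real k))"
    and "(\<Sum>k\<in>{1..N}. row_width x (real k)) \<le> x * alpha"
    unfolding sum_integral_diff_series_def by simp_all
qed

lemma real_nat_ceiling_le: "0 \<le> x \<Longrightarrow> real (nat \<lceil>x\<rceil>) \<le> x + 1"
  by simp

lemma card_euclid_pairs_approx:
  assumes "x > 0"
  shows "\<bar>real (card (euclid_pairs x)) - x * alpha / 2\<bar> \<le> 2 * sqrt x + 1"
proof -
  define N where "N = nat \<lceil>sqrt x\<rceil>"
  have N: "sqrt x \<le> real N" "real N \<le> sqrt x + 1"
    unfolding N_def using real_nat_ceiling_ge real_nat_ceiling_le assms by auto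
  have "\<bar>(\<Sum>k\<in>{1..N}. real (card {r. (r, int k) \<in> euclid_pairs x}))
           - (\<Sum>k\<in>{1..N}. row_width x (real k)) / 2\<bar>
        \<le> (\<Sum>k\<in>{1..N}. \<bar>real (card {r. (r, int k) \<in> euclid_pairs x}) - row_width x (real k) / 2\<bar>)"
    by (simp add: sum_divide_distrib flip: sum_subtractf)
  also have "\<dots> \<le> (\<Sum>k\<in>{1..N}. 1)"
    by (intro sum_mono card_euclid_row_approx[OF assms]) auto
  finally show ?thesis
    using sum_row_width_bounds[OF assms N(1)] N card_euclid_pairs_eq_sum_rows[OF assms]
    unfolding N_def[symmetric] by (simp add: abs_le_iff)
qed

section \<open>Primitive pairs and the triples of D\<close>

definition odd_upto :: "nat \<Rightarrow> nat set" where
  "odd_upto N = {g \<in> {1..N}. odd g}"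

lemma finite_odd_upto [simp]: "finite (odd_upto N)"
  unfolding odd_upto_def by simp

lemma odd_upto_mono: "M \<le> N \<Longrightarrow> odd_upto M \<subseteq> odd_upto N"
  unfolding odd_upto_def by auto

lemma one_in_odd_upto: "1 \<le> N \<Longrightarrow> 1 \<in> odd_upto N"
  unfolding odd_upto_def by auto

lemma card_odd_upto_le: "card (odd_upto N) \<le> N"
proof -
  have "card (odd_upto N) \<le> card {1..N}" by (intro card_mono) (auto simp: odd_upto_def)
  thus ?thesis by simp
qed

lemma odd_upto_0 [simp]: "odd_upto 0 = {}"
  unfolding odd_upto_def by auto

lemma odd_upto_Suc:
  "odd_upto (Suc N) = (if odd (Suc N) then insert (Suc N) (odd_upto N) else odd_upto N)"
  unfolding odd_upto_def by (auto simp: le_Suc_eq)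

lemma Suc_notin_odd_upto [simp]: "Suc N \<notin> odd_upto N"
  unfolding odd_upto_def by auto

lemma opposite_parity_iff: "(r mod 2 \<noteq> s mod 2) = (even r \<noteq> even (s :: int))"
  by presburger

lemma scaled_mem_euclid_pairs_iff:
  fixes g :: int
  assumes "g > 0" "odd g"
  shows "(g * r, g * s) \<in> euclid_pairs y \<longleftrightarrow> (r, s) \<in> euclid_pairs (y / (of_int g)\<^sup>2)"
proof -
  have g: "(of_int g :: real)\<^sup>2 > 0" using assms by simp
  have "real_of_int ((g * r)\<^sup>2 - (g * s)\<^sup>2) \<le> y \<longleftrightarrow> real_of_int (r\<^sup>2 - s\<^sup>2) \<le> y / (of_int g)\<^sup>2"
  proof -
    have "real_of_int ((g * r)\<^sup>2 - (g * s)\<^sup>2) = real_of_int (r\<^sup>2 - s\<^sup>2) * (of_int g)\<^sup>2"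
      by (simp add: power_mult_distrib algebra_simps)
    thus ?thesis using g by (simp only: pos_le_divide_eq)
  qed
  moreover have "real_of_int (2 * (g * r) * (g * s)) \<le> y \<longleftrightarrow> real_of_int (2 * r * s) \<le> y / (of_int g)\<^sup>2"
  proof -
    have "real_of_int (2 * (g * r) * (g * s)) = real_of_int (2 * r * s) * (of_int g)\<^sup>2"
      by (simp add: power2_eq_square algebra_simps)
    thus ?thesis using g by (simp only: pos_le_divide_eq)
  qed
  moreover have "(g * r) mod 2 \<noteq> (g * s) mod 2 \<longleftrightarrow> r mod 2 \<noteq> s mod 2"
    using assms(2) unfolding opposite_parity_iff by simp
  moreover have "g * s < g * r \<longleftrightarrow> s < r" "0 < g * s \<longleftrightarrow> 0 < s"
    using assms(1) by (simp_all add: zero_less_mult_iff)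
  ultimately show ?thesis
    unfolding euclid_pairs_def by (simp only: mem_Collect_eq case_prod_conv)
qed

lemma euclid_pair_primitive_decomp:
  assumes "(r, s) \<in> euclid_pairs y"
  obtains g r' s' where "0 < g" "odd g" "g \<le> s" "r = g * r'" "s = g * s'"
    "(r', s') \<in> primitive_euclid_pairs (y / (of_int g)\<^sup>2)"
proof -
  define g where "g = gcd r s"
  have rs: "0 < s" "r mod 2 \<noteq> s mod 2" using assms unfolding euclid_pairs_def by auto
  hence "g > 0" unfolding g_def by simp
  obtain r' s' where eq: "r = g * r'" "s = g * s'"
    unfolding g_def by (meson dvdE gcd_dvd1 gcd_dvd2)
  have "odd g" using rs(2) unfolding eq opposite_parity_iff by auto
  have "g \<le> s" unfolding g_def using rs(1) by (simp add: zdvd_imp_le)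
  have "gcd (g * r') (g * s') = g" using g_def unfolding eq by simp
  hence "gcd r' s' = 1" using \<open>g > 0\<close> by (simp add: gcd_mult_left)
  moreover have "(r', s') \<in> euclid_pairs (y / (of_int g)\<^sup>2)"
    using assms \<open>g > 0\<close> \<open>odd g\<close> unfolding eq by (simp add: scaled_mem_euclid_pairs_iff)
  ultimately show ?thesis
    using that \<open>g > 0\<close> \<open>odd g\<close> \<open>g \<le> s\<close> eq unfolding primitive_euclid_pairs_def by auto
qed

lemma euclid_pairs_eq_UN_primitive:
  assumes "sqrt y \<le> real N"
  shows "euclid_pairs y
           = (\<Union>g\<in>odd_upto N. (\<lambda>(r, s). (int g * r, int g * s)) ` primitive_euclid_pairs (y / (real g)\<^sup>2))"
proof (intro equalityI subsetI)
  fix p assume p: "p \<in> euclid_pairs y"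
  then obtain r s where rs: "p = (r, s)" "s < r" "0 < s" "real_of_int (2 * r * s) \<le> y"
    unfolding euclid_pairs_def by auto
  obtain g r' s' where g: "0 < g" "odd g" "g \<le> s" "r = g * r'" "s = g * s'"
    "(r', s') \<in> primitive_euclid_pairs (y / (of_int g)\<^sup>2)"
    using euclid_pair_primitive_decomp p rs(1) by blast
  have "real_of_int g \<le> sqrt y" using euclid_pair_snd_le_sqrt[OF rs(2-4)] g(3) by linarith
  hence "nat g \<in> odd_upto N"
    using assms g unfolding odd_upto_def by (auto simp: even_nat_iff)
  thus "p \<in> (\<Union>g\<in>odd_upto N. (\<lambda>(r, s). (int g * r, int g * s)) ` primitive_euclid_pairs (y / (real g)\<^sup>2))"
    using g rs(1) by force
next
  fix p
  assume "p \<in> (\<Union>g\<in>odd_upto N. (\<lambda>(r, s). (int g * r, int g * s)) ` primitive_euclid_pairs (y / (real g)\<^sup>2))"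
  then obtain g r s where "g \<in> odd_upto N" "(r, s) \<in> euclid_pairs (y / (real g)\<^sup>2)"
    "p = (int g * r, int g * s)"
    unfolding primitive_euclid_pairs_def by auto
  thus "p \<in> euclid_pairs y"
    using scaled_mem_euclid_pairs_iff[of "int g" r s y] unfolding odd_upto_def by auto
qed

lemma card_euclid_pairs_eq_sum_primitive:
  assumes "sqrt y \<le> real N"
  shows "card (euclid_pairs y) = (\<Sum>g\<in>odd_upto N. card (primitive_euclid_pairs (y / (real g)\<^sup>2)))"
proof -
  let ?scale = "\<lambda>g::nat. \<lambda>(r, s). (int g * r, int g * s)"
  have "?scale i ` primitive_euclid_pairs (y / (real i)\<^sup>2) \<inter> ?scale j ` primitive_euclid_pairs (y / (real j)\<^sup>2) = {}"
    if "i \<noteq> j" for i j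
  proof (rule ccontr)
    assume "\<not> ?thesis"
    then obtain r1 s1 r2 s2 where h: "coprime r1 s1" "coprime r2 s2"
      "int i * r1 = int j * r2" "int i * s1 = int j * s2"
      unfolding primitive_euclid_pairs_def by auto
    have "gcd (int i * r1) (int i * s1) = int i" "gcd (int j * r2) (int j * s2) = int j"
      using h(1,2) by (simp_all add: gcd_mult_left coprime_iff_gcd_eq_1)
    thus False using h(3,4) that by (metis of_nat_eq_iff)
  qed
  hence "card (euclid_pairs y) = (\<Sum>g\<in>odd_upto N. card (?scale g ` primitive_euclid_pairs (y / (real g)\<^sup>2)))"
    unfolding euclid_pairs_eq_UN_primitive[OF assms] by (intro card_UN_disjoint) auto
  also have "\<dots> = (\<Sum>g\<in>odd_upto N. card (primitive_euclid_pairs (y / (real g)\<^sup>2)))"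
    by (intro sum.cong refl card_image) (auto simp: inj_on_def odd_upto_def)
  finally show ?thesis .
qed

lemma D_eq_UN_primitive:
  "D n = (\<Union>k\<in>odd_upto (nat \<lfloor>n\<rfloor>). (\<lambda>(r, s). (int k, r, s)) ` primitive_euclid_pairs (n / real k))"
proof (intro equalityI subsetI)
  fix p assume "p \<in> D n"
  then obtain k r s where p: "p = (k, r, s)" "k > 0" "odd k" "s < r" "0 < s" "gcd r s = 1"
    "r mod 2 \<noteq> s mod 2" "real_of_int (k * (r\<^sup>2 - s\<^sup>2)) \<le> n" "real_of_int (2 * k * r * s) \<le> n"
    unfolding D_def by auto
  have "s\<^sup>2 < r\<^sup>2" using p by (simp add: power_strict_mono)
  hence "k \<le> k * (r\<^sup>2 - s\<^sup>2)" using p(2) by (simp add: mult_le_cancel_left1)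
  hence "real_of_int k \<le> n" using p(8) by linarith
  hence "k \<le> \<lfloor>n\<rfloor>" by (simp add: le_floor_iff)
  hence "nat k \<in> odd_upto (nat \<lfloor>n\<rfloor>)"
    using p unfolding odd_upto_def by (auto simp: even_nat_iff)
  moreover have "(r, s) \<in> primitive_euclid_pairs (n / real (nat k))"
    using p unfolding primitive_euclid_pairs_def euclid_pairs_def
    by (simp add: pos_le_divide_eq ac_simps)
  ultimately show "p \<in> (\<Union>k\<in>odd_upto (nat \<lfloor>n\<rfloor>). (\<lambda>(r, s). (int k, r, s)) ` primitive_euclid_pairs (n / real k))"
    using p(1,2) by force
next
  fix p
  assume "p \<in> (\<Union>k\<in>odd_upto (nat \<lfloor>n\<rfloor>). (\<lambda>(r, s). (int k, r, s)) ` primitive_euclid_pairs (n / real k))"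
  then obtain k r s where "k \<in> odd_upto (nat \<lfloor>n\<rfloor>)" "(r, s) \<in> primitive_euclid_pairs (n / real k)"
    "p = (int k, r, s)" by auto
  thus "p \<in> D n"
    unfolding D_def odd_upto_def primitive_euclid_pairs_def euclid_pairs_def
    by (auto simp: pos_le_divide_eq ac_simps)
qed

lemma card_D_eq_sum_primitive:
  "card (D n) = (\<Sum>k\<in>odd_upto (nat \<lfloor>n\<rfloor>). card (primitive_euclid_pairs (n / real k)))"
proof -
  have "card (D n) = (\<Sum>k\<in>odd_upto (nat \<lfloor>n\<rfloor>).
                        card ((\<lambda>(r, s). (int k, r, s)) ` primitive_euclid_pairs (n / real k)))"
    unfolding D_eq_UN_primitive by (rule card_UN_disjoint) auto
  also have "\<dots> = (\<Sum>k\<in>odd_upto (nat \<lfloor>n\<rfloor>). card (primitive_euclid_pairs (n / real k)))"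
    by (intro sum.cong refl card_image) (auto simp: inj_on_def)
  finally show ?thesis .
qed

section \<open>Sums over odd integers\<close>

lemma inverse_squares_split_parity:
  "(\<Sum>n<2 * M. 1 / (real n + 1)\<^sup>2)
     = (\<Sum>g\<in>odd_upto (2 * M). 1 / (real g)\<^sup>2) + (\<Sum>n<M. 1 / (real n + 1)\<^sup>2) / 4"
proof (induction M)
  case (Suc M)
  have "odd_upto (2 * Suc M) = insert (Suc (2 * M)) (odd_upto (2 * M))"
    using odd_upto_Suc[of "Suc (2 * M)"] odd_upto_Suc[of "2 * M"] by simp
  moreover have "1 / (2 * real M + 2)\<^sup>2 = (1 / (real M + 1)\<^sup>2) / 4"
    by (simp add: field_simps power2_eq_square)
  ultimately show ?case using Suc.IH by (simp add: algebra_simps)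
qed simp

lemma odd_inverse_squares_tendsto:
  "(\<lambda>M. \<Sum>g\<in>odd_upto (2 * M). 1 / (real g)\<^sup>2) \<longlonglongrightarrow> pi\<^sup>2 / 8"
proof -
  have all: "(\<lambda>M. \<Sum>n<M. 1 / (real n + 1)\<^sup>2) \<longlonglongrightarrow> pi\<^sup>2 / 6"
    using inverse_squares_sums unfolding sums_def by (simp add: add.commute)
  hence "(\<lambda>M. \<Sum>n<2 * M. 1 / (real n + 1)\<^sup>2) \<longlonglongrightarrow> pi\<^sup>2 / 6"
    by (rule LIMSEQ_subseq_LIMSEQ[unfolded o_def]) (simp add: strict_mono_def)
  hence "(\<lambda>M. (\<Sum>n<2 * M. 1 / (real n + 1)\<^sup>2) - (\<Sum>n<M. 1 / (real n + 1)\<^sup>2) / 4)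
           \<longlonglongrightarrow> pi\<^sup>2 / 6 - (pi\<^sup>2 / 6) / 4"
    by (rule tendsto_diff[OF _ tendsto_divide[OF all tendsto_const]]) simp_all
  thus ?thesis by (simp add: inverse_squares_split_parity)
qed

lemma odd_inverse_squares_mono:
  "M \<le> N \<Longrightarrow> (\<Sum>g\<in>odd_upto M. 1 / (real g)\<^sup>2) \<le> (\<Sum>g\<in>odd_upto N. 1 / (real g)\<^sup>2)"
  by (intro sum_mono2 odd_upto_mono) auto

lemma odd_inverse_squares_le: "(\<Sum>g\<in>odd_upto N. 1 / (real g)\<^sup>2) \<le> pi\<^sup>2 / 8"
proof -
  have "incseq (\<lambda>M. \<Sum>g\<in>odd_upto (2 * M). 1 / (real g)\<^sup>2)"
    by (intro incseq_SucI odd_inverse_squares_mono) auto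
  hence "(\<Sum>g\<in>odd_upto (2 * N). 1 / (real g)\<^sup>2) \<le> pi\<^sup>2 / 8"
    by (rule incseq_le[OF _ odd_inverse_squares_tendsto])
  thus ?thesis using odd_inverse_squares_mono[of N "2 * N"] by simp
qed

lemma odd_inverse_squares_approx:
  assumes "e > 0"
  obtains G where "G \<ge> 1" "pi\<^sup>2 / 8 - e \<le> (\<Sum>g\<in>odd_upto G. 1 / (real g)\<^sup>2)"
proof -
  obtain M where "dist (\<Sum>g\<in>odd_upto (2 * M). 1 / (real g)\<^sup>2) (pi\<^sup>2 / 8) < e"
    using tendstoD[OF odd_inverse_squares_tendsto assms] by (meson eventually_sequentially order.refl)
  hence "pi\<^sup>2 / 8 - e \<le> (\<Sum>g\<in>odd_upto (2 * M + 2). 1 / (real g)\<^sup>2)"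
    using odd_inverse_squares_mono[of "2 * M" "2 * M + 2"] by (simp add: dist_real_def abs_less_iff)
  thus ?thesis using that[of "2 * M + 2"] by simp
qed

definition odd_harmonic :: "nat \<Rightarrow> real" where
  "odd_harmonic N = (\<Sum>k\<in>odd_upto N. 1 / real k)"

lemma odd_harmonic_eq_harm: "odd_harmonic K = harm K - harm (K div 2) / 2"
proof (induction K)
  case (Suc K)
  show ?case
  proof (cases "odd (Suc K)")
    case True
    hence "Suc K div 2 = K div 2" by presburger
    moreover have "odd_harmonic (Suc K) = odd_harmonic K + 1 / real (Suc K)"
      using True by (simp add: odd_harmonic_def odd_upto_Suc)
    ultimately show ?thesis using Suc.IH by (simp add: harm_Suc inverse_eq_divide)
  next
    case False
    hence d: "Suc K div 2 = Suc (K div 2)" by presburger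
    have "Suc (K div 2) * 2 = Suc K" using False by presburger
    hence "inverse (real (Suc (K div 2))) / 2 = inverse (real (Suc K))"
      by (metis divide_inverse inverse_mult_distrib mult.commute of_nat_mult of_nat_numeral)
    moreover have "odd_harmonic (Suc K) = odd_harmonic K"
      using False by (simp add: odd_harmonic_def odd_upto_Suc)
    ultimately show ?thesis using Suc.IH unfolding d harm_Suc by (simp add: diff_divide_distrib add_divide_distrib)
  qed
qed (simp add: harm_def odd_harmonic_def)

lemma harm_le_ln_plus_1: "n > 0 \<Longrightarrow> (harm n :: real) \<le> ln (real n) + 1"
  using euler_mascheroni_sequence_decreasing[of 1 n] by (simp add: harm_def)

lemma odd_harmonic_approx_ln:
  assumes "K \<ge> 2"
  shows "\<bar>odd_harmonic K - ln (real K) / 2\<bar> \<le> 2"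
proof -
  define m where "m = K div 2"
  have "m \<ge> 1" "m \<le> K" "K \<le> 2 * (m + 1)" using assms unfolding m_def by presburger+
  hence m: "m \<ge> 1" "real m \<le> real K" "real K \<le> 2 * (real m + 1)" by simp_all
  have "ln (real K) \<le> ln (2 * (real m + 1))" using m assms by simp
  also have "\<dots> = ln 2 + ln (real m + 1)" by (rule ln_mult_pos) auto
  finally have "ln (real K) \<le> ln 2 + ln (real m + 1)" .
  moreover have "ln (real K) \<le> ln (real K + 1)" "ln (real m) \<le> ln (real K)" using assms m by simp_all
  moreover have "ln (real K + 1) \<le> harm K" "harm K \<le> ln (real K) + 1"
    "ln (real m + 1) \<le> harm m" "harm m \<le> ln (real m) + 1"
    using harm_ge_ln harm_le_ln_plus_1 assms m(1) by auto
  ultimately show ?thesis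
    using ln_2_less_1 unfolding odd_harmonic_eq_harm m_def[symmetric] by (simp add: abs_le_iff)
qed

section \<open>Inverting a sum over odd square dilations\<close>

lemma eventually_sqrt_le_linear:
  assumes "e > 0"
  shows "eventually (\<lambda>y. B * (sqrt y + 1) \<le> e * y) at_top"
proof -
  have "((\<lambda>y. B * ((sqrt y + 1) / y)) \<longlongrightarrow> 0) at_top"
    by (intro tendsto_mult_right_zero) real_asymp
  hence "eventually (\<lambda>y. B * ((sqrt y + 1) / y) < e) at_top"
    using assms by (rule order_tendstoD(2))
  with eventually_gt_at_top[of 0] show ?thesis
    by eventually_elim (simp add: pos_divide_less_eq)
qed

definition odd_inverse_squares_tail :: real where
  "odd_inverse_squares_tail = pi\<^sup>2 / 8 - 1"

lemma odd_inverse_squares_tail_bounds: "0 \<le> odd_inverse_squares_tail" "odd_inverse_squares_tail < 1"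
proof -
  have "(3::real)\<^sup>2 < pi\<^sup>2" using pi_gt3 by (intro power_strict_mono) auto
  moreover have "pi\<^sup>2 < (4::real)\<^sup>2" using pi_less_4 by (intro power_strict_mono) auto
  ultimately show "0 \<le> odd_inverse_squares_tail" "odd_inverse_squares_tail < 1"
    unfolding odd_inverse_squares_tail_def by simp_all
qed

text \<open>
  Write q for the weight \<Sum> g^-2 of the odd g > 1, so that 1 + q = \<pi>^2/8. An eventual bound
  P y \<le> u y yields P y \<ge> (c - q u) y up to o(y), and a bound P y \<ge> l y yields
  P y \<le> (c - q l) y; since q < 1, iterating this contraction pins the slope of P down to
  its fixed point c / (1 + q).
\<close>

locale odd_square_dilations =
  fixes P Q :: "real \<Rightarrow> real" and c :: real
  assumes P_nonneg: "0 \<le> P y"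
    and P_mono: "y \<le> y' \<Longrightarrow> P y \<le> P y'"
    and Q_eq_sum: "1 \<le> y \<Longrightarrow> sqrt y \<le> real N \<Longrightarrow> Q y = (\<Sum>g\<in>odd_upto N. P (y / (real g)\<^sup>2))"
    and Q_asymp: "e > 0 \<Longrightarrow> eventually (\<lambda>y. \<bar>Q y - c * y\<bar> \<le> e * y) at_top"
begin

abbreviation q :: real where "q \<equiv> odd_inverse_squares_tail"

lemma Q_eq_P_plus_sum:
  assumes "1 \<le> y" "sqrt y \<le> real N"
  shows "Q y = P y + (\<Sum>g\<in>odd_upto N - {1}. P (y / (real g)\<^sup>2))"
proof -
  have "1 \<le> sqrt y" using assms(1) by simp
  hence "1 \<in> odd_upto N" using assms(2) by (intro one_in_odd_upto) linarith
  thus ?thesis using Q_eq_sum[OF assms] by (simp add: sum.remove)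
qed

definition upper_slope :: "real \<Rightarrow> bool" where
  "upper_slope u \<longleftrightarrow> eventually (\<lambda>y. P y \<le> u * y) at_top"

definition lower_slope :: "real \<Rightarrow> bool" where
  "lower_slope l \<longleftrightarrow> eventually (\<lambda>y. l * y \<le> P y) at_top"

lemma upper_slope_mono: assumes "upper_slope u" "u \<le> u'" shows "upper_slope u'"
  using assms(1) eventually_ge_at_top[of 0] unfolding upper_slope_def
  by eventually_elim (meson assms(2) mult_right_mono order_trans)

lemma lower_slope_mono: assumes "lower_slope l" "l' \<le> l" shows "lower_slope l'"
  using assms(1) eventually_ge_at_top[of 0] unfolding lower_slope_def
  by eventually_elim (meson assms(2) mult_right_mono order_trans)

lemma lower_slope_0: "lower_slope 0"
  unfolding lower_slope_def by (simp add: P_nonneg)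

lemma upper_slope_nonneg: assumes "upper_slope u" shows "u \<ge> 0"
proof (rule ccontr)
  assume "\<not> u \<ge> 0"
  from assms eventually_gt_at_top[of 0] have "eventually (\<lambda>y::real. False) at_top"
    unfolding upper_slope_def
    by eventually_elim (use \<open>\<not> u \<ge> 0\<close> P_nonneg in \<open>smt (verit) mult_neg_pos\<close>)
  thus False by simp
qed

lemma upper_slope_initial: "upper_slope (c + 1)"
proof -
  have "eventually (\<lambda>y. \<bar>Q y - c * y\<bar> \<le> 1 * y) at_top" by (rule Q_asymp) simp
  with eventually_ge_at_top[of 1] show ?thesis
    unfolding upper_slope_def
  proof eventually_elim
    case (elim y)
    have "P y \<le> Q y"
      using Q_eq_P_plus_sum[OF elim(1) real_nat_ceiling_ge] by (simp add: sum_nonneg P_nonneg)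
    thus ?case using elim by (simp add: algebra_simps abs_le_iff)
  qed
qed

lemma P_lower_bound_from_upper:
  assumes upper: "\<And>y. Y0 \<le> y \<Longrightarrow> P y \<le> u * y" and "u \<ge> 0" "1 \<le> y"
  shows "Q y - q * u * y - P Y0 * (sqrt y + 1) \<le> P y"
proof -
  define N where "N = nat \<lceil>sqrt y\<rceil>"
  have N: "sqrt y \<le> real N" "real N \<le> sqrt y + 1"
    unfolding N_def using real_nat_ceiling_ge real_nat_ceiling_le assms(3) by auto
  have "P (y / (real g)\<^sup>2) \<le> u * y * (1 / (real g)\<^sup>2) + P Y0" for g
  proof (cases "Y0 \<le> y / (real g)\<^sup>2")
    case True
    thus ?thesis using upper[OF True] P_nonneg[of Y0] by simp
  next
    case False
    moreover have "0 \<le> u * y * (1 / (real g)\<^sup>2)" using assms(2,3) by simp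
    ultimately show ?thesis using P_mono[of "y / (real g)\<^sup>2" Y0] by linarith
  qed
  hence "(\<Sum>g\<in>odd_upto N - {1}. P (y / (real g)\<^sup>2))
         \<le> (\<Sum>g\<in>odd_upto N - {1}. u * y * (1 / (real g)\<^sup>2) + P Y0)"
    by (intro sum_mono)
  also have "\<dots> = u * y * (\<Sum>g\<in>odd_upto N - {1}. 1 / (real g)\<^sup>2) + P Y0 * real (card (odd_upto N - {1}))"
    by (simp add: sum.distrib sum_distrib_left)
  also have "\<dots> \<le> u * y * q + P Y0 * (sqrt y + 1)"
  proof (intro add_mono mult_left_mono)
    have "1 \<le> sqrt y" using assms(3) by simp
    hence "1 \<in> odd_upto N" using N(1) by (intro one_in_odd_upto) linarith
    thus "(\<Sum>g\<in>odd_upto N - {1}. 1 / (real g)\<^sup>2) \<le> q"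
      using odd_inverse_squares_le[of N] by (simp add: sum_diff1 odd_inverse_squares_tail_def)
    show "real (card (odd_upto N - {1})) \<le> sqrt y + 1"
      using card_odd_upto_le[of N] card_Diff1_le[of "odd_upto N" 1] N(2) by linarith
  qed (use assms(2,3) P_nonneg in auto)
  finally show ?thesis using Q_eq_P_plus_sum[OF assms(3) N(1)] by (simp add: algebra_simps)
qed

lemma lower_slope_from_upper:
  assumes "upper_slope u" "e > 0"
  shows "lower_slope (c - q * u - e)"
proof -
  obtain Y0 where Y0: "\<And>y. Y0 \<le> y \<Longrightarrow> P y \<le> u * y"
    using assms(1) unfolding upper_slope_def eventually_at_top_linorder by blast
  have "eventually (\<lambda>y. \<bar>Q y - c * y\<bar> \<le> (e / 2) * y) at_top" using assms by (intro Q_asymp) simp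
  moreover have "eventually (\<lambda>y. P Y0 * (sqrt y + 1) \<le> (e / 2) * y) at_top"
    using assms by (intro eventually_sqrt_le_linear) simp
  ultimately show ?thesis
    using eventually_ge_at_top[of 1] unfolding lower_slope_def
  proof eventually_elim
    case (elim y)
    have "Q y - q * u * y - P Y0 * (sqrt y + 1) \<le> P y"
      using P_lower_bound_from_upper[of Y0 u y] Y0 upper_slope_nonneg[OF assms(1)] elim(3) by blast
    moreover have "(c - q * u - e) * y = c * y - q * u * y - (e / 2) * y - (e / 2) * y"
      by (simp add: algebra_simps)
    ultimately show ?case using elim(1,2) unfolding abs_le_iff by linarith
  qed
qed

lemma P_upper_bound_from_lower:
  assumes lower: "\<And>y. Y0 \<le> y \<Longrightarrow> l * y \<le> P y" and "l \<ge> 0" "Y0 \<ge> 0"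
    and "1 \<le> G" "1 \<le> y" "Y0 * (real G)\<^sup>2 \<le> y"
  shows "P y \<le> Q y - l * y * ((\<Sum>g\<in>odd_upto G. 1 / (real g)\<^sup>2) - 1)"
proof -
  define N where "N = max G (nat \<lceil>sqrt y\<rceil>)"
  have N: "sqrt y \<le> real N" unfolding N_def by (metis max.cobounded2 of_nat_mono real_nat_ceiling_ge order_trans)
  have "l * y * (1 / (real g)\<^sup>2) \<le> P (y / (real g)\<^sup>2)" if "g \<in> odd_upto G" for g
  proof -
    have g: "1 \<le> g" "g \<le> G" using that unfolding odd_upto_def by auto
    have "Y0 * (real g)\<^sup>2 \<le> Y0 * (real G)\<^sup>2" using g assms(3) by (intro mult_left_mono power_mono) auto
    hence "Y0 \<le> y / (real g)\<^sup>2" using g assms(6) by (simp add: pos_le_divide_eq)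
    thus ?thesis using lower[of "y / (real g)\<^sup>2"] by simp
  qed
  hence "(\<Sum>g\<in>odd_upto G - {1}. l * y * (1 / (real g)\<^sup>2)) \<le> (\<Sum>g\<in>odd_upto G - {1}. P (y / (real g)\<^sup>2))"
    by (intro sum_mono) auto
  moreover have "(\<Sum>g\<in>odd_upto G - {1}. l * y * (1 / (real g)\<^sup>2))
                   = l * y * ((\<Sum>g\<in>odd_upto G. 1 / (real g)\<^sup>2) - 1)"
    using one_in_odd_upto[OF assms(4)] by (simp add: sum_diff1 sum_distrib_left right_diff_distrib)
  ultimately have "l * y * ((\<Sum>g\<in>odd_upto G. 1 / (real g)\<^sup>2) - 1) \<le> (\<Sum>g\<in>odd_upto G - {1}. P (y / (real g)\<^sup>2))"
    by simp
  also have "\<dots> \<le> (\<Sum>g\<in>odd_upto N - {1}. P (y / (real g)\<^sup>2))"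
    using odd_upto_mono[of G N] unfolding N_def by (intro sum_mono2) (auto simp: P_nonneg)
  finally show ?thesis using Q_eq_P_plus_sum[OF assms(5) N] by simp
qed

lemma upper_slope_from_nonneg_lower:
  assumes "lower_slope l" "l \<ge> 0" "e > 0"
  shows "upper_slope (c - q * l + e)"
proof -
  define \<eta> where "\<eta> = e / (2 * (l + 1))"
  have \<eta>: "\<eta> > 0" "l * \<eta> \<le> e / 2"
    using assms by (auto simp: \<eta>_def field_simps)
  obtain G where G: "G \<ge> 1" "1 + q - \<eta> \<le> (\<Sum>g\<in>odd_upto G. 1 / (real g)\<^sup>2)"
    using odd_inverse_squares_approx[OF \<eta>(1)] unfolding odd_inverse_squares_tail_def by auto
  obtain Y1 where Y1: "\<And>y. Y1 \<le> y \<Longrightarrow> l * y \<le> P y"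
    using assms(1) unfolding lower_slope_def eventually_at_top_linorder by blast
  define Y0 where "Y0 = max Y1 0"
  have Y0: "\<And>y. Y0 \<le> y \<Longrightarrow> l * y \<le> P y" "Y0 \<ge> 0" using Y1 unfolding Y0_def by auto
  have "eventually (\<lambda>y. \<bar>Q y - c * y\<bar> \<le> (e / 2) * y) at_top" using assms by (intro Q_asymp) simp
  with eventually_ge_at_top[of "max 1 (Y0 * (real G)\<^sup>2)"] show ?thesis
    unfolding upper_slope_def
  proof eventually_elim
    case (elim y)
    have "P y \<le> Q y - l * y * ((\<Sum>g\<in>odd_upto G. 1 / (real g)\<^sup>2) - 1)"
      using P_upper_bound_from_lower[of Y0 l G y] Y0 assms(2) G(1) elim(1) by auto
    moreover have "l * y * (q - \<eta>) \<le> l * y * ((\<Sum>g\<in>odd_upto G. 1 / (real g)\<^sup>2) - 1)"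
      using G(2) assms(2) elim(1) by (intro mult_left_mono) auto
    moreover have "l * \<eta> * y \<le> (e / 2) * y" using \<eta>(2) elim(1) by (intro mult_right_mono) auto
    ultimately show ?case using elim(2) unfolding abs_le_iff by (simp add: algebra_simps)
  qed
qed

lemma upper_slope_from_lower:
  assumes "lower_slope l" "e > 0"
  shows "upper_slope (c - q * l + e)"
proof (cases "l \<ge> 0")
  case False
  have "upper_slope (c - q * 0 + e)" by (rule upper_slope_from_nonneg_lower[OF lower_slope_0 _ assms(2)]) simp
  moreover have "q * l \<le> 0" using False odd_inverse_squares_tail_bounds by (intro mult_nonneg_nonpos) auto
  ultimately show ?thesis by (elim upper_slope_mono) simp
qed (use upper_slope_from_nonneg_lower assms in blast)

lemma upper_slope_iterate:
  assumes "e > 0"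
  shows "upper_slope (c / (1 + q) + (q\<^sup>2) ^ k * (c + 1 - c / (1 + q)) + e / (1 - q))"
proof (induction k)
  case 0
  show ?case
    using upper_slope_initial assms odd_inverse_squares_tail_bounds by (elim upper_slope_mono) simp
next
  case (Suc k)
  define p where "p = c / (1 + q)"
  define d where "d = (q\<^sup>2) ^ k * (c + 1 - p) + e / (1 - q)"
  have q: "1 + q \<noteq> 0" "1 - q \<noteq> 0" using odd_inverse_squares_tail_bounds by auto
  have "lower_slope (c - q * (p + d) - e)"
    using lower_slope_from_upper[OF Suc.IH assms] by (simp add: p_def d_def add.assoc)
  hence "upper_slope (c - q * (c - q * (p + d) - e) + e)"
    using upper_slope_from_lower assms by blast
  moreover have "c - q * (c - q * (p + d) - e) + e = p + q\<^sup>2 * d + (1 + q) * e"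
  proof -
    have "c = p * (1 + q)" using q unfolding p_def by simp
    thus ?thesis by (simp add: algebra_simps power2_eq_square)
  qed
  moreover have "q\<^sup>2 * d + (1 + q) * e = (q\<^sup>2) ^ Suc k * (c + 1 - p) + e / (1 - q)"
    unfolding d_def using q by (simp add: field_simps power2_eq_square)
  ultimately show ?case by (simp add: p_def add.assoc)
qed

theorem P_asymp:
  assumes "d > 0"
  shows "eventually (\<lambda>y. \<bar>P y - c / (1 + q) * y\<bar> \<le> d * y) at_top"
proof -
  define p where "p = c / (1 + q)"
  have q: "0 \<le> q" "q < 1" by (fact odd_inverse_squares_tail_bounds)+
  define e where "e = d * (1 - q) / 4"
  have e: "e > 0" "e / (1 - q) = d / 4" "e \<le> d / 4"
    using assms q unfolding e_def by (auto simp: mult_left_le_one_le field_simps)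
  have "(\<lambda>k. (q\<^sup>2) ^ k * (c + 1 - p)) \<longlonglongrightarrow> 0"
    using q by (intro tendsto_mult_left_zero LIMSEQ_power_zero) (simp add: power_less_one_iff)
  hence "eventually (\<lambda>k. (q\<^sup>2) ^ k * (c + 1 - p) < d / 4) sequentially"
    using assms by (intro order_tendstoD(2)) auto
  then obtain k where k: "(q\<^sup>2) ^ k * (c + 1 - p) < d / 4"
    by (meson eventually_sequentially order.refl)
  have "upper_slope (p + (q\<^sup>2) ^ k * (c + 1 - p) + e / (1 - q))"
    using upper_slope_iterate[OF e(1), of k] unfolding p_def .
  hence upper: "upper_slope (p + d / 2)"
    by (elim upper_slope_mono) (use k e(2) in linarith)
  have "lower_slope (c - q * (p + d / 2) - e)"
    by (rule lower_slope_from_upper[OF upper e(1)])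
  moreover have "c - q * (p + d / 2) - e = p - q * d / 2 - e"
  proof -
    have "c = p * (1 + q)" using q unfolding p_def by simp
    thus ?thesis by (simp add: algebra_simps)
  qed
  moreover have "q * d / 2 \<le> d / 2" using q assms by (simp add: mult_left_le_one_le)
  ultimately have "lower_slope (p - d)"
    using e(3) assms by (elim lower_slope_mono) linarith
  moreover have "upper_slope (p + d)" using upper assms by (elim upper_slope_mono) simp
  ultimately show ?thesis unfolding lower_slope_def upper_slope_def p_def
    by eventually_elim (simp add: algebra_simps abs_le_iff)
qed

end

section \<open>Sums over odd dilations and the main theorem\<close>

lemma uniform_of_eventually_linear_approx:
  fixes f :: "real \<Rightarrow> real"
  assumes "mono f" "\<And>y. 0 \<le> f y" "0 \<le> p" "0 \<le> d"
    and "eventually (\<lambda>y. \<bar>f y - p * y\<bar> \<le> d * y) at_top"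
  obtains C where "C \<ge> 0" "\<And>y. 0 \<le> y \<Longrightarrow> \<bar>f y - p * y\<bar> \<le> d * y + C"
proof -
  obtain Y0 where Y0: "\<And>y. Y0 \<le> y \<Longrightarrow> \<bar>f y - p * y\<bar> \<le> d * y"
    using assms(5) unfolding eventually_at_top_linorder by blast
  define Y1 where "Y1 = max Y0 0"
  define C where "C = f Y1 + p * Y1"
  have "C \<ge> 0" unfolding C_def Y1_def using assms(2,3) by simp
  moreover have "\<bar>f y - p * y\<bar> \<le> d * y + C" if "0 \<le> y" for y
  proof (cases "Y1 \<le> y")
    case True
    thus ?thesis using Y0[of y] \<open>C \<ge> 0\<close> unfolding Y1_def by simp
  next
    case False
    have "\<bar>f y - p * y\<bar> \<le> f y + p * y" using assms(2,3) that by (simp add: abs_le_iff)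
    also have "\<dots> \<le> C" unfolding C_def using False assms(3)
      by (intro add_mono monoD[OF assms(1)] mult_left_mono) auto
    finally show ?thesis using assms(4) that by (simp add: add_increasing)
  qed
  ultimately show ?thesis using that by blast
qed

lemma sum_odd_dilations_approx:
  assumes "C \<ge> 0" "\<And>y. 0 \<le> y \<Longrightarrow> \<bar>P y - p * y\<bar> \<le> d * y + C" "0 \<le> n"
  defines "H \<equiv> odd_harmonic (nat \<lfloor>n\<rfloor>)"
  shows "\<bar>(\<Sum>k\<in>odd_upto (nat \<lfloor>n\<rfloor>). P (n / real k)) - p * n * H\<bar> \<le> d * n * H + C * n"
proof -
  let ?K = "odd_upto (nat \<lfloor>n\<rfloor>)"
  have "\<bar>(\<Sum>k\<in>?K. P (n / real k)) - p * n * H\<bar> = \<bar>\<Sum>k\<in>?K. P (n / real k) - p * (n / real k)\<bar>"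
    unfolding H_def odd_harmonic_def by (simp add: sum_subtractf sum_distrib_left)
  also have "\<dots> \<le> (\<Sum>k\<in>?K. d * (n / real k) + C)"
    by (intro order.trans[OF sum_abs] sum_mono assms(2)) (use assms(3) in simp)
  also have "\<dots> = d * n * H + C * real (card ?K)"
    unfolding H_def odd_harmonic_def by (simp add: sum.distrib sum_distrib_left)
  also have "real (card ?K) \<le> n"
    using card_odd_upto_le[of "nat \<lfloor>n\<rfloor>"] assms(3) by linarith
  finally show ?thesis using assms(1) by (simp add: mult_left_mono)
qed

lemma odd_harmonic_floor_approx_ln:
  assumes "n \<ge> 2"
  shows "\<bar>odd_harmonic (nat \<lfloor>n\<rfloor>) - ln n / 2\<bar> \<le> 3"
proof -
  define K where "K = nat \<lfloor>n\<rfloor>"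
  have K: "K \<ge> 2" "real K \<le> n" "n \<le> 2 * real K" unfolding K_def using assms by linarith+
  have "ln n \<le> ln (2 * real K)" using K by simp
  also have "\<dots> = ln 2 + ln (real K)" by (rule ln_mult_pos) (use K in auto)
  finally have "ln n \<le> ln 2 + ln (real K)" .
  moreover have "ln (real K) \<le> ln n" using K by simp
  ultimately show ?thesis
    using odd_harmonic_approx_ln[OF K(1)] ln_2_less_1 unfolding K_def[symmetric] by (simp add: abs_le_iff)
qed

lemma odd_harmonic_floor_asymp_ln: "(\<lambda>n. odd_harmonic (nat \<lfloor>n\<rfloor>)) \<sim>[at_top] (\<lambda>n. ln n / 2)"
proof (rule smallo_imp_asymp_equiv)
  have "eventually (\<lambda>n. \<bar>odd_harmonic (nat \<lfloor>n\<rfloor>) - ln n / 2\<bar> \<le> 3) at_top"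
    using eventually_ge_at_top[of 2] by eventually_elim (rule odd_harmonic_floor_approx_ln)
  hence "(\<lambda>n. odd_harmonic (nat \<lfloor>n\<rfloor>) - ln n / 2) \<in> O[at_top](\<lambda>_. 1)"
    by (intro bigoI[of _ 3]) simp
  also have "(\<lambda>_. 1) \<in> o[at_top](\<lambda>n::real. ln n / 2)" by real_asymp
  finally show "(\<lambda>n. odd_harmonic (nat \<lfloor>n\<rfloor>) - ln n / 2) \<in> o[at_top](\<lambda>n. ln n / 2)" .
qed

lemma sum_odd_dilations_asymp_odd_harmonic:
  fixes P :: "real \<Rightarrow> real"
  assumes "p > 0"
    and approx: "\<And>d. d > 0 \<Longrightarrow> \<exists>C\<ge>0. \<forall>y\<ge>0. \<bar>P y - p * y\<bar> \<le> d * y + C"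
  shows "(\<lambda>n. \<Sum>k\<in>odd_upto (nat \<lfloor>n\<rfloor>). P (n / real k))
           \<sim>[at_top] (\<lambda>n. p * n * odd_harmonic (nat \<lfloor>n\<rfloor>))"
proof (rule smallo_imp_asymp_equiv, rule landau_o.smallI)
  define H where "H n = odd_harmonic (nat \<lfloor>n\<rfloor>)" for n :: real
  fix \<epsilon> :: real assume "\<epsilon> > 0"
  then obtain C where C: "C \<ge> 0" "\<And>y. 0 \<le> y \<Longrightarrow> \<bar>P y - p * y\<bar> \<le> \<epsilon> * p / 2 * y + C"
    using approx[of "\<epsilon> * p / 2"] assms(1) by auto
  define M where "M = 2 * C / (\<epsilon> * p)"
  have "eventually (\<lambda>n. 2 * M + 6 \<le> ln n) at_top"
    using ln_at_top unfolding filterlim_at_top by blast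
  with eventually_ge_at_top[of 2]
  show "eventually (\<lambda>n. norm ((\<Sum>k\<in>odd_upto (nat \<lfloor>n\<rfloor>). P (n / real k)) - p * n * H n)
                         \<le> \<epsilon> * norm (p * n * H n)) at_top"
  proof eventually_elim
    case (elim n)
    have "ln n / 2 - 3 \<le> H n" using odd_harmonic_floor_approx_ln[OF elim(1)] by (simp add: H_def abs_le_iff)
    hence "M \<le> H n" using elim(2) by linarith
    hence "\<epsilon> * p / 2 * M \<le> \<epsilon> * p / 2 * H n"
      using \<open>\<epsilon> > 0\<close> assms(1) by (intro mult_left_mono) auto
    hence "C \<le> \<epsilon> * p / 2 * H n" using \<open>\<epsilon> > 0\<close> assms(1) by (simp add: M_def)
    hence "C * n \<le> \<epsilon> * p / 2 * H n * n" using elim(1) by (intro mult_right_mono) auto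
    moreover have "\<bar>(\<Sum>k\<in>odd_upto (nat \<lfloor>n\<rfloor>). P (n / real k)) - p * n * H n\<bar>
                     \<le> \<epsilon> * p / 2 * H n * n + C * n"
      using sum_odd_dilations_approx[OF C, of n] elim(1) unfolding H_def by (simp add: mult_ac)
    moreover have "norm (p * n * H n) = p * H n * n"
      using elim(1) assms(1) by (simp add: H_def odd_harmonic_def sum_nonneg abs_mult)
    ultimately show ?case by (simp add: algebra_simps)
  qed
qed

lemma sum_odd_dilations_asymp:
  fixes P :: "real \<Rightarrow> real"
  assumes "p > 0"
    and "\<And>d. d > 0 \<Longrightarrow> \<exists>C\<ge>0. \<forall>y\<ge>0. \<bar>P y - p * y\<bar> \<le> d * y + C"
  shows "(\<lambda>n. \<Sum>k\<in>odd_upto (nat \<lfloor>n\<rfloor>). P (n / real k)) \<sim>[at_top] (\<lambda>n. p / 2 * n * ln n)"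
proof -
  note sum_odd_dilations_asymp_odd_harmonic[OF assms]
  also have "(\<lambda>n. p * n * odd_harmonic (nat \<lfloor>n\<rfloor>)) \<sim>[at_top] (\<lambda>n. p * n * (ln n / 2))"
    by (intro asymp_equiv_intros odd_harmonic_floor_asymp_ln)
  finally show ?thesis by (simp add: mult_ac)
qed

lemma alpha_pos: "alpha > 0"
  unfolding alpha_def by (intro ln_gt_zero) simp

interpretation euclid: odd_square_dilations
  "\<lambda>y. real (card (primitive_euclid_pairs y))" "\<lambda>y. real (card (euclid_pairs y))" "alpha / 2"
proof
  show "real (card (primitive_euclid_pairs y)) \<le> real (card (primitive_euclid_pairs y'))" if "y \<le> y'" for y y'
    using card_mono[OF finite_primitive_euclid_pairs primitive_euclid_pairs_mono[OF that]] by simp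
  show "real (card (euclid_pairs y)) = (\<Sum>g\<in>odd_upto N. real (card (primitive_euclid_pairs (y / (real g)\<^sup>2))))"
    if "sqrt y \<le> real N" for y N
    using card_euclid_pairs_eq_sum_primitive[OF that] by simp
  show "eventually (\<lambda>y. \<bar>real (card (euclid_pairs y)) - alpha / 2 * y\<bar> \<le> e * y) at_top" if "e > 0" for e
    using eventually_sqrt_le_linear[OF that, of 2] eventually_gt_at_top[of 0]
    by eventually_elim (use card_euclid_pairs_approx in \<open>fastforce simp: algebra_simps\<close>)
qed simp

theorem proposition3p8:
  shows "(\<lambda>n::real. real (card (D n))) \<sim>[at_top] (\<lambda>n. 2 * alpha / pi\<^sup>2 * n * ln n)"
proof -
  define p where "p = alpha / 2 / (1 + odd_inverse_squares_tail)"
  have p: "p > 0" "p / 2 = 2 * alpha / pi\<^sup>2"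
    using alpha_pos odd_inverse_squares_tail_bounds by (auto simp: p_def odd_inverse_squares_tail_def)
  have "\<exists>C\<ge>0. \<forall>y\<ge>0. \<bar>real (card (primitive_euclid_pairs y)) - p * y\<bar> \<le> d * y + C" if "d > 0" for d
    using uniform_of_eventually_linear_approx[OF _ _ _ _ euclid.P_asymp[OF that]] p that
      euclid.P_mono unfolding p_def by (metis less_imp_le monoI of_nat_0_le_iff)
  hence "(\<lambda>n. \<Sum>k\<in>odd_upto (nat \<lfloor>n\<rfloor>). real (card (primitive_euclid_pairs (n / real k))))
           \<sim>[at_top] (\<lambda>n. p / 2 * n * ln n)"
    by (intro sum_odd_dilations_asymp p(1))
  thus ?thesis unfolding card_D_eq_sum_primitive p(2) by simp
qed

end
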